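(* Fix $\epsilon_2>0$ and $(u_\pm,v_\pm)$ with $v_\pm>0$ and $u_+<u_--2\epsilon_2$. For small $\epsilon_1>0$ let $(u^{\epsilon_1\epsilon_2},v^{\epsilon_1\epsilon_2})$ be the two-shock Riemann solution of the perturbed Brio system with data $(u_\pm,v_\pm)$. Then as $\epsilon_1\to0$, in the sense of distributions on $t>0$, $$u^{\epsilon_1\epsilon_2}\to u_-+(u_+-u_-)H(x-\sigma t),\qquad v^{\epsilon_1\epsilon_2}\to v_-+(v_+-v_-)H(x-\sigma t)+w^{\epsilon_2}(t)\delta_S,$$ with $\sigma=\tfrac12(u_-+u_+)$, $S=\{(t,\sigma t)\}$, $w^{\epsilon_2}(t)=\tfrac12\big(v_+(u_--u_++2\epsilon_2)-v_-(u_+-u_-+2\epsilon_2)\big)t$; this limit is the delta-shock solution of $u_t+(\tfrac12u^2)_x=0$, $v_t+(uv-\epsilon_2v)_x=0$ with these Riemann data, whose value of $u$ on the discontinuity is $u_\delta=\sigma+\epsilon_2$ (the limit of the intermediate velocity).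
   Context: Perturbed Brio system: $u_t+(\tfrac12u^2+\tfrac12\epsilon_1v^2)_x=0$, $v_t+(uv-\epsilon_2v)_x=0$, $\epsilon_1,\epsilon_2>0$, $v>0$, with Riemann data $(u_-,v_-)$ for $x<0$, $(u_+,v_+)$ for $x>0$. The two-shock solution is $(u_-,v_-)$ for $x/t<\sigma_1$, $(u_*,v_* )$ for $\sigma_1<x/t<\sigma_2$, $(u_+,v_+)$ for $x/t>\sigma_2$, where $v_*>\max(v_-,v_+)$, $u_+<u_*<u_-$, $$u_*=u_-+(v_*-v_-)\frac{\epsilon_2-\sqrt{\epsilon_2^2+4\epsilon_1(v_*+v_-)^2}}{v_*+v_-},\qquad u_+=u_*+(v_+-v_* )\frac{\epsilon_2+\sqrt{\epsilon_2^2+4\epsilon_1(v_*+v_+)^2}}{v_*+v_+},$$ $\sigma_1=u_-+\frac{v_*(u_*-u_-)}{v_*-v_-}-\epsilon_2$, $\sigma_2=u_++\frac{v_*(u_+-u_* )}{v_+-v_*}-\epsilon_2$. $H$ is the Heaviside function and $\langle w\delta_S,\phi\rangle=\int_0^\infty w(t)\phi(t,\sigma t)dt$. *)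

theory Defs
  imports "HOL-Analysis.Analysis"
begin

text \<open>Points of the (t,x) half-plane are pairs z = (t, x) :: real \<times> real.\<close>

fun Ck :: "nat \<Rightarrow> (real \<times> real \<Rightarrow> real) \<Rightarrow> bool" where
  "Ck 0 f = continuous_on UNIV f"
| "Ck (Suc k) f = (\<exists>f'. (\<forall>z. (f has_derivative f' z) (at z))
      \<and> Ck k (\<lambda>z. f' z (1, 0)) \<and> Ck k (\<lambda>z. f' z (0, 1)))"

definition smooth2 :: "(real \<times> real \<Rightarrow> real) \<Rightarrow> bool" where
  "smooth2 f \<longleftrightarrow> (\<forall>k. Ck k f)"

definition tsupp :: "(real \<times> real \<Rightarrow> real) \<Rightarrow> (real \<times> real) set" where
  "tsupp f = closure {z. f z \<noteq> 0}"

definition test_fun :: "(real \<times> real \<Rightarrow> real) \<Rightarrow> bool" where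
  "test_fun \<phi> \<longleftrightarrow> smooth2 \<phi> \<and> compact (tsupp \<phi>) \<and> tsupp \<phi> \<subseteq> {z. fst z > 0}"

definition d_t :: "(real \<times> real \<Rightarrow> real) \<Rightarrow> real \<times> real \<Rightarrow> real" where
  "d_t \<phi> z = frechet_derivative \<phi> (at z) (1, 0)"

definition d_x :: "(real \<times> real \<Rightarrow> real) \<Rightarrow> real \<times> real \<Rightarrow> real" where
  "d_x \<phi> z = frechet_derivative \<phi> (at z) (0, 1)"

definition pair_fn :: "(real \<times> real \<Rightarrow> real) \<Rightarrow> (real \<times> real \<Rightarrow> real) \<Rightarrow> real" where
  "pair_fn f \<phi> = (\<integral>z. f z * \<phi> z \<partial>lborel)"

text \<open>Pairing of w(t) \<delta>_S, S = {(t, \<sigma> t)}, with a test function: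
  \<langle>w \<delta>_S, \<phi>\<rangle> = \<integral>_0^\<infinity> w(t) \<phi>(t, \<sigma> t) dt.\<close>
definition pair_delta :: "(real \<Rightarrow> real) \<Rightarrow> real \<Rightarrow> (real \<times> real \<Rightarrow> real) \<Rightarrow> real" where
  "pair_delta w \<sigma> \<phi> = (\<integral>t. indicator {0<..} t * w t * \<phi> (t, \<sigma> * t) \<partial>lborel)"

definition H :: "real \<Rightarrow> real" where
  "H y = (if y \<ge> 0 then 1 else 0)"

text \<open>Two-shock Riemann solution of the perturbed Brio system, parametrised by the
  intermediate state v_* (written vs).  Arguments: e1 = \<epsilon>1, e2 = \<epsilon>2.\<close>
definition ustar :: "real \<Rightarrow> real \<Rightarrow> real \<Rightarrow> real \<Rightarrow> real \<Rightarrow> real" where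
  "ustar e1 e2 um vm vs =
     um + (vs - vm) * (e2 - sqrt (e2^2 + 4 * e1 * (vs + vm)^2)) / (vs + vm)"

definition sigma1 :: "real \<Rightarrow> real \<Rightarrow> real \<Rightarrow> real \<Rightarrow> real \<Rightarrow> real" where
  "sigma1 e1 e2 um vm vs = um + vs * (ustar e1 e2 um vm vs - um) / (vs - vm) - e2"

definition sigma2 :: "real \<Rightarrow> real \<Rightarrow> real \<Rightarrow> real \<Rightarrow> real \<Rightarrow> real \<Rightarrow> real \<Rightarrow> real" where
  "sigma2 e1 e2 um vm up vp vs = up + vs * (up - ustar e1 e2 um vm vs) / (vp - vs) - e2"

definition two_shock_state :: "real \<Rightarrow> real \<Rightarrow> real \<Rightarrow> real \<Rightarrow> real \<Rightarrow> real \<Rightarrow> real \<Rightarrow> bool" where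
  "two_shock_state e1 e2 um vm up vp vs \<longleftrightarrow>
     vs > max vm vp \<and>
     up < ustar e1 e2 um vm vs \<and> ustar e1 e2 um vm vs < um \<and>
     up = ustar e1 e2 um vm vs + (vp - vs) * (e2 + sqrt (e2^2 + 4 * e1 * (vs + vp)^2)) / (vs + vp) \<and>
     sigma1 e1 e2 um vm vs < sigma2 e1 e2 um vm up vp vs"

definition two_shock_u :: "real \<Rightarrow> real \<Rightarrow> real \<Rightarrow> real \<Rightarrow> real \<Rightarrow> real \<Rightarrow> real \<Rightarrow> real \<times> real \<Rightarrow> real" where
  "two_shock_u e1 e2 um vm up vp vs z =
     (let t = fst z; x = snd z in
      if x < sigma1 e1 e2 um vm vs * t then um
      else if x < sigma2 e1 e2 um vm up vp vs * t then ustar e1 e2 um vm vs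
      else up)"

definition two_shock_v :: "real \<Rightarrow> real \<Rightarrow> real \<Rightarrow> real \<Rightarrow> real \<Rightarrow> real \<Rightarrow> real \<Rightarrow> real \<times> real \<Rightarrow> real" where
  "two_shock_v e1 e2 um vm up vp vs z =
     (let t = fst z; x = snd z in
      if x < sigma1 e1 e2 um vm vs * t then vm
      else if x < sigma2 e1 e2 um vm up vp vs * t then vs
      else vp)"

end

theory Submission
  imports Defs "HOL-Real_Asymp.Real_Asymp"
begin

text \<open>As \<open>\<epsilon>\<^sub>1 \<rightarrow> 0\<close> the two-shock relations force \<open>v\<^sub>* \<rightarrow> \<infinity>\<close>, and then \<open>u\<^sub>* \<rightarrow> \<sigma> + \<epsilon>\<^sub>2\<close>,
  \<open>\<sigma>\<^sub>1, \<sigma>\<^sub>2 \<rightarrow> \<sigma>\<close> and \<open>v\<^sub>* (\<sigma>\<^sub>2 - \<sigma>\<^sub>1) \<rightarrow> w(t)/t\<close>: the middle state collapses onto the ray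
  \<open>x = \<sigma> t\<close> while its mass survives.  Tested against \<open>\<phi>\<close>, a function that is constant between
  rays \<open>x = c t\<close> only sees the masses \<open>M(c)\<close> of \<open>\<phi>\<close> below these rays (\<open>lower_mass\<close>), and \<open>M\<close> is
  strictly differentiable with \<open>M'(\<sigma>) = \<integral>\<^sub>0\<^sup>\<infinity> t \<phi>(t, \<sigma> t) dt\<close> (\<open>ray_moment\<close>); this derivative
  is the delta part of the limit.  The weak formulation of the limit reduces, by Fubini and the
  fundamental theorem of calculus along the lines \<open>x = y + c t\<close>, to the Rankine-Hugoniot relation
  and its delta-shock analogue.\<close>

section \<open>Integration over the plane\<close>

definition continuous_compact_support :: "('a::euclidean_space \<Rightarrow> real) \<Rightarrow> bool" where
  "continuous_compact_support f \<longleftrightarrow>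
     continuous_on UNIV f \<and> (\<exists>K. compact K \<and> (\<forall>z. z \<notin> K \<longrightarrow> f z = 0))"

lemma integrable_continuous_compact_support:
  assumes "continuous_compact_support f"
  shows "integrable lborel f"
proof -
  obtain K where K: "compact K" "\<forall>z. z \<notin> K \<longrightarrow> f z = 0" and c: "continuous_on UNIV f"
    using assms unfolding continuous_compact_support_def by blast
  have "integrable lborel (\<lambda>x. indicator K x *\<^sub>R f x)"
    by (rule borel_integrable_compact[OF K(1)]) (rule continuous_on_subset[OF c], simp)
  moreover have "(\<lambda>x. indicator K x *\<^sub>R f x) = f"
    using K(2) by (auto simp: indicator_def fun_eq_iff)
  ultimately show ?thesis by simp
qed

lemma integrable_indicator_mult_continuous_compact_support:
  assumes "continuous_compact_support f" "A \<in> sets borel"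
  shows "integrable lborel (\<lambda>z. indicator A z * f z)"
  using integrable_real_mult_indicator[of A lborel f] integrable_continuous_compact_support[OF assms(1)] assms(2)
  by (simp add: mult.commute)

lemma continuous_compact_support_pairI:
  fixes f :: "real \<times> real \<Rightarrow> real"
  assumes "continuous_on UNIV f" "\<And>z. \<bar>fst z\<bar> > A \<or> \<bar>snd z\<bar> > A \<Longrightarrow> f z = 0"
  shows "continuous_compact_support f"
  unfolding continuous_compact_support_def
proof (intro conjI exI allI impI)
  show "compact (cbox (-A,-A) (A,A))" by simp
  fix z :: "real \<times> real" assume "z \<notin> cbox (-A,-A) (A,A)"
  then have "\<bar>fst z\<bar> > A \<or> \<bar>snd z\<bar> > A"
    by (cases z) (auto simp: cbox_Pair_iff)
  then show "f z = 0" using assms(2) by blast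
qed (use assms in auto)

lemma continuous_compact_support_realI:
  fixes f :: "real \<Rightarrow> real"
  assumes "continuous_on UNIV f" "\<And>z. \<bar>z\<bar> > A \<Longrightarrow> f z = 0"
  shows "continuous_compact_support f"
  unfolding continuous_compact_support_def
proof (intro conjI exI allI impI)
  show "compact {-A..A}" by simp
  fix z :: real assume "z \<notin> {-A..A}"
  then show "f z = 0" using assms(2) by auto
qed (use assms in auto)

lemma integral_lessThan_derivative:
  fixes g g' :: "real \<Rightarrow> real"
  assumes g: "\<And>x. (g has_real_derivative g' x) (at x)" and c: "continuous_on UNIV g'"
    and vanish: "\<And>x. \<bar>x\<bar> > R \<Longrightarrow> g x = 0 \<and> g' x = 0"
  shows "(\<integral>x. indicator {..<a} x * g' x \<partial>lborel) = g a"
proof -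
  define L where "L = - \<bar>R\<bar> - \<bar>a\<bar> - 1"
  have La: "L \<le> a" unfolding L_def by linarith
  have [measurable]: "g' \<in> borel_measurable borel" using c by (rule borel_measurable_continuous_onI)
  have "(\<integral>x. indicator {..<a} x * g' x \<partial>lborel) = (\<integral>x. indicator {L..a} x *\<^sub>R g' x \<partial>lborel)"
  proof (rule integral_cong_AE)
    show "AE x in lborel. indicator {..<a} x * g' x = indicator {L..a} x *\<^sub>R g' x"
    proof (rule eventually_mono[OF AE_lborel_singleton[of a]])
      fix x :: real assume "x \<noteq> a"
      show "indicator {..<a} x * g' x = indicator {L..a} x *\<^sub>R g' x"
      proof (cases "x < L")
        case True
        then have "\<bar>x\<bar> > R" unfolding L_def by linarith
        then show ?thesis using vanish[of x] True by (simp add: indicator_def)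
      qed (use \<open>x \<noteq> a\<close> in \<open>auto simp: indicator_def\<close>)
    qed
  qed simp_all
  also have "\<dots> = g a - g L"
  proof (rule integral_FTC_atLeastAtMost[OF La])
    show "\<And>x. L \<le> x \<Longrightarrow> x \<le> a \<Longrightarrow> (g has_vector_derivative g' x) (at x within {L..a})"
      using g by (metis has_real_derivative_iff_has_vector_derivative has_vector_derivative_at_within)
    show "continuous_on {L..a} g'" using c by (rule continuous_on_subset) simp
  qed
  also have "g L = 0" using vanish[of L] unfolding L_def by auto
  finally show ?thesis by simp
qed

lemma integral_derivative_eq_0:
  fixes g g' :: "real \<Rightarrow> real"
  assumes g: "\<And>x. (g has_real_derivative g' x) (at x)" and c: "continuous_on UNIV g'"
    and vanish: "\<And>x. \<bar>x\<bar> > R \<Longrightarrow> g x = 0 \<and> g' x = 0"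
  shows "(\<integral>x. g' x \<partial>lborel) = 0"
proof -
  define a where "a = \<bar>R\<bar> + 1"
  have "(\<lambda>x. indicator {..<a} x * g' x) = g'"
  proof
    fix x show "indicator {..<a} x * g' x = g' x"
      using vanish[of x] unfolding a_def by (cases "x < a") (auto simp: indicator_def a_def)
  qed
  moreover have "g a = 0" using vanish[of a] unfolding a_def by auto
  ultimately show ?thesis using integral_lessThan_derivative[where R=R and a=a, OF g c vanish] by simp
qed

lemma integral_lborel_pair_fst:
  fixes f :: "real \<times> real \<Rightarrow> real"
  assumes "integrable lborel f"
  shows "(\<integral>z. f z \<partial>lborel) = (\<integral>t. (\<integral>x. f (t,x) \<partial>lborel) \<partial>lborel)"
    and "integrable lborel (\<lambda>t. \<integral>x. f (t,x) \<partial>lborel)"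
proof -
  have "integrable (lborel \<Otimes>\<^sub>M lborel) f" using assms by (simp add: lborel_prod)
  from lborel_pair.integral_fst'[OF this] lborel_pair.integrable_fst'[OF this]
  show "(\<integral>z. f z \<partial>lborel) = (\<integral>t. (\<integral>x. f (t,x) \<partial>lborel) \<partial>lborel)"
    and "integrable lborel (\<lambda>t. \<integral>x. f (t,x) \<partial>lborel)"
    by (simp_all add: lborel_prod)
qed

lemma integral_lborel_pair_snd:
  fixes f :: "real \<times> real \<Rightarrow> real"
  assumes "integrable lborel f"
  shows "(\<integral>z. f z \<partial>lborel) = (\<integral>x. (\<integral>t. f (t,x) \<partial>lborel) \<partial>lborel)"
proof -
  have "integrable (lborel \<Otimes>\<^sub>M lborel) (\<lambda>(t, x). f (t,x))" using assms by (simp add: lborel_prod)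
  from lborel_pair.integral_snd[OF this] show ?thesis by (simp add: lborel_prod)
qed

lemma integral_lborel_shear:
  fixes f :: "real \<times> real \<Rightarrow> real"
  assumes f: "integrable lborel f" and f_shear: "integrable lborel (\<lambda>z. f (fst z, snd z + c * fst z))"
  shows "(\<integral>z. f z \<partial>lborel) = (\<integral>y. (\<integral>t. f (t, y + c * t) \<partial>lborel) \<partial>lborel)"
proof -
  have "(\<integral>z. f z \<partial>lborel) = (\<integral>t. (\<integral>x. f (t, x) \<partial>lborel) \<partial>lborel)"
    by (rule integral_lborel_pair_fst(1)[OF f])
  also have "\<dots> = (\<integral>t. (\<integral>y. f (t, y + c * t) \<partial>lborel) \<partial>lborel)"
  proof (rule Bochner_Integration.integral_cong[OF refl])
    show "(\<integral>x. f (t, x) \<partial>lborel) = (\<integral>y. f (t, y + c * t) \<partial>lborel)" for t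
      using lborel_integral_real_affine[where c=1 and t="c * t" and f="\<lambda>x. f (t, x)"]
      by (simp add: add.commute)
  qed
  also have "\<dots> = (\<integral>y. (\<integral>t. f (t, y + c * t) \<partial>lborel) \<partial>lborel)"
    using integral_lborel_pair_fst(1)[OF f_shear] integral_lborel_pair_snd[OF f_shear] by simp
  finally show ?thesis .
qed

lemma sets_borel_linear_preimage:
  assumes "S \<in> sets borel"
  shows "{z::real \<times> real. a * fst z + b * snd z \<in> S} \<in> sets borel"
proof -
  have "(\<lambda>z::real \<times> real. a * fst z + b * snd z) \<in> borel_measurable borel"
    by (intro borel_measurable_continuous_onI continuous_intros)
  from measurable_sets[OF this assms] show ?thesis by (simp add: vimage_def)
qed

section \<open>Functions that jump across rays\<close>

lemma abs_between_rays_le: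
  fixes c1 c2 \<sigma> t x :: real
  assumes "\<bar>c1 - \<sigma>\<bar> \<le> \<eta>" "\<bar>c2 - \<sigma>\<bar> \<le> \<eta>" "0 \<le> t" "t \<le> T" "c1 * t \<le> x" "x \<le> c2 * t"
  shows "\<bar>x - \<sigma> * t\<bar> \<le> \<eta> * T"
proof -
  have "(c2 - \<sigma>) * t \<le> \<eta> * t" "(\<sigma> - c1) * t \<le> \<eta> * t"
    using assms by (auto intro!: mult_right_mono)
  moreover have "\<eta> * t \<le> \<eta> * T"
    using assms by (intro mult_left_mono) auto
  ultimately show ?thesis using assms unfolding left_diff_distrib by linarith
qed

definition below_line :: "real \<Rightarrow> (real \<times> real) set" where
  "below_line c = {z. snd z < c * fst z}"

lemma mem_below_line [simp]: "z \<in> below_line c \<longleftrightarrow> snd z < c * fst z"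
  by (simp add: below_line_def)

lemma sets_borel_below_line [measurable]: "below_line c \<in> sets borel"
proof -
  have "below_line c = {z. (-c) * fst z + 1 * snd z \<in> {..<0}}" by auto
  then show ?thesis using sets_borel_linear_preimage[of "{..<0}" "-c" 1] by simp
qed

definition jump :: "real \<Rightarrow> real \<Rightarrow> real \<Rightarrow> real \<times> real \<Rightarrow> real" where
  "jump c a b z = (if snd z < c * fst z then a else b)"

definition three_state :: "real \<Rightarrow> real \<Rightarrow> real \<Rightarrow> real \<Rightarrow> real \<Rightarrow> real \<times> real \<Rightarrow> real" where
  "three_state c1 c2 a1 a2 a3 z =
     (if snd z < c1 * fst z then a1 else if snd z < c2 * fst z then a2 else a3)"

lemma jump_eq_indicator: "jump c a b z = b + (a - b) * indicator (below_line c) z"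
  by (simp add: jump_def indicator_def)

lemma jump_eq_Heaviside: "jump c a b z = a + (b - a) * H (snd z - c * fst z)"
  by (simp add: jump_def H_def)

lemma jump_comp: "(\<lambda>z. f (jump c a b z)) = jump c (f a) (f b)"
  by (simp add: jump_def fun_eq_iff)

lemma jump_comp2: "(\<lambda>z. f (jump c a b z) (jump c a' b' z)) = jump c (f a a') (f b b')"
  by (simp add: jump_def fun_eq_iff)

lemma three_state_eq_indicator:
  assumes "c1 < c2" "fst z > 0"
  shows "three_state c1 c2 a1 a2 a3 z
     = a3 + (a1 - a3) * indicator (below_line c1) z
          + (a2 - a3) * (indicator (below_line c2) z - indicator (below_line c1) z)"
proof -
  have "c1 * fst z < c2 * fst z" using assms by simp
  then show ?thesis by (auto simp: three_state_def indicator_def)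
qed

lemma two_shock_u_eq_three_state:
  "two_shock_u e1 e2 um vm up vp vs
     = three_state (sigma1 e1 e2 um vm vs) (sigma2 e1 e2 um vm up vp vs) um (ustar e1 e2 um vm vs) up"
  by (simp add: fun_eq_iff two_shock_u_def three_state_def Let_def)

lemma two_shock_v_eq_three_state:
  "two_shock_v e1 e2 um vm up vp vs
     = three_state (sigma1 e1 e2 um vm vs) (sigma2 e1 e2 um vm up vp vs) vm vs vp"
  by (simp add: fun_eq_iff two_shock_v_def three_state_def Let_def)

lemma pair_fn_jump_eq:
  assumes "integrable lborel f" "integrable lborel (\<lambda>z. indicator (below_line c) z * f z)"
  shows "pair_fn (jump c a b) f
    = b * (\<integral>z. f z \<partial>lborel) + (a - b) * (\<integral>z. indicator (below_line c) z * f z \<partial>lborel)"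
proof -
  have "(\<lambda>z. jump c a b z * f z) = (\<lambda>z. b * f z + (a - b) * (indicator (below_line c) z * f z))"
    by (simp add: fun_eq_iff jump_eq_indicator algebra_simps)
  then show ?thesis unfolding pair_fn_def using assms by simp
qed

section \<open>Test functions\<close>

locale test_function =
  fixes \<phi> :: "real \<times> real \<Rightarrow> real" and B :: real
  assumes B_pos: "B > 0"
    and differentiable: "\<And>z. \<phi> differentiable (at z)"
    and continuous_d_t: "continuous_on UNIV (d_t \<phi>)"
    and continuous_d_x: "continuous_on UNIV (d_x \<phi>)"
    and vanishing: "\<And>z. \<not> (0 < fst z \<and> fst z \<le> B \<and> \<bar>snd z\<bar> \<le> B) \<Longrightarrow>
                          \<phi> z = 0 \<and> d_t \<phi> z = 0 \<and> d_x \<phi> z = 0"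

lemma zero_outside_tsupp: "z \<notin> tsupp \<phi> \<Longrightarrow> \<phi> z = 0"
  using closure_subset[of "{z. \<phi> z \<noteq> 0}"] unfolding tsupp_def by auto

lemma has_derivative_outside_tsupp:
  assumes "z \<notin> tsupp \<phi>"
  shows "(\<phi> has_derivative (\<lambda>_. 0)) (at z)"
proof -
  have "open (- tsupp \<phi>)" unfolding tsupp_def by (simp add: open_Compl)
  have "((\<lambda>_. 0::real) has_derivative (\<lambda>_. 0)) (at z)" by simp
  then show ?thesis
    by (rule has_derivative_transform_within_open[OF _ \<open>open (- tsupp \<phi>)\<close>])
       (use assms zero_outside_tsupp in force)+
qed

lemma test_fun_imp_test_function:
  assumes "test_fun \<phi>"
  obtains B where "test_function \<phi> B"
proof -
  obtain f' where f': "\<And>z. (\<phi> has_derivative f' z) (at z)"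
    and cont_t: "continuous_on UNIV (\<lambda>z. f' z (1,0))" and cont_x: "continuous_on UNIV (\<lambda>z. f' z (0,1))"
    using assms unfolding test_fun_def smooth2_def by (metis Ck.simps(1,2))
  have d_t: "d_t \<phi> = (\<lambda>z. f' z (1,0))" and d_x: "d_x \<phi> = (\<lambda>z. f' z (0,1))"
    unfolding d_t_def d_x_def using frechet_derivative_at[OF f'] by auto
  have K: "compact (tsupp \<phi>)" "tsupp \<phi> \<subseteq> {z. fst z > 0}"
    using assms unfolding test_fun_def by auto
  obtain B0 where B0: "\<And>z. z \<in> tsupp \<phi> \<Longrightarrow> norm z \<le> B0"
    using compact_imp_bounded[OF K(1)] unfolding bounded_iff by blast
  define B where "B = \<bar>B0\<bar> + 1"
  have "\<phi> z = 0 \<and> d_t \<phi> z = 0 \<and> d_x \<phi> z = 0"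
    if outside: "\<not> (0 < fst z \<and> fst z \<le> B \<and> \<bar>snd z\<bar> \<le> B)" for z
  proof -
    have z_out: "z \<notin> tsupp \<phi>"
    proof
      assume "z \<in> tsupp \<phi>"
      then have "norm z \<le> B0" "fst z > 0" using B0 K(2) by auto
      moreover have "\<bar>fst z\<bar> \<le> norm z" "\<bar>snd z\<bar> \<le> norm z"
        using norm_fst_le[of "fst z" "snd z"] norm_snd_le[of "snd z" "fst z"] by simp_all
      ultimately show False using outside unfolding B_def by linarith
    qed
    then have "f' z = (\<lambda>_. 0)"
      using has_derivative_unique[OF f'[of z]] has_derivative_outside_tsupp by metis
    then show ?thesis using zero_outside_tsupp z_out d_t d_x by auto
  qed
  moreover have "\<phi> differentiable (at z)" for z using f'[of z] by (rule differentiableI)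
  ultimately have "test_function \<phi> B"
    using cont_t cont_x unfolding test_function_def B_def d_t d_x by auto
  then show ?thesis using that by blast
qed

context test_function
begin

lemma has_derivative: "(\<phi> has_derivative frechet_derivative \<phi> (at z)) (at z)"
  using differentiable frechet_derivative_works by blast

lemma continuous: "continuous_on UNIV \<phi>"
  using has_derivative by (meson continuous_at_imp_continuous_on has_derivative_continuous)

lemma frechet_derivative_eq: "frechet_derivative \<phi> (at z) (h, k) = h * d_t \<phi> z + k * d_x \<phi> z"
proof -
  interpret linear "frechet_derivative \<phi> (at z)" using has_derivative by (rule has_derivative_linear)
  have "(h, k) = h *\<^sub>R (1, 0) + k *\<^sub>R (0, 1)" by simp
  then show ?thesis unfolding d_t_def d_x_def by (metis add scale real_scaleR_def)
qed

lemma vanishing_sheared: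
  assumes "\<bar>t\<bar> > B + \<bar>c\<bar> * B \<or> \<bar>y\<bar> > B + \<bar>c\<bar> * B"
  shows "\<phi> (t, y + c * t) = 0 \<and> d_t \<phi> (t, y + c * t) = 0 \<and> d_x \<phi> (t, y + c * t) = 0"
proof (rule vanishing, safe)
  assume t: "0 < fst (t, y + c * t)" "fst (t, y + c * t) \<le> B" "\<bar>snd (t, y + c * t)\<bar> \<le> B"
  have "\<bar>c * t\<bar> \<le> \<bar>c\<bar> * B" using t by (simp add: abs_mult mult_left_mono)
  moreover have "0 \<le> \<bar>c\<bar> * B" using B_pos by simp
  ultimately show False using t assms by auto
qed

lemma vanishing_far:
  "\<bar>fst z\<bar> > B \<or> \<bar>snd z\<bar> > B \<Longrightarrow> \<phi> z = 0 \<and> d_t \<phi> z = 0 \<and> d_x \<phi> z = 0"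
  by (rule vanishing) auto

lemma continuous_compact_support: "continuous_compact_support \<phi>"
  by (rule continuous_compact_support_pairI[OF continuous, of B]) (use vanishing_far in blast)

lemma continuous_compact_support_d_t: "continuous_compact_support (d_t \<phi>)"
  by (rule continuous_compact_support_pairI[OF continuous_d_t, of B]) (use vanishing_far in blast)

lemma continuous_compact_support_d_x: "continuous_compact_support (d_x \<phi>)"
  by (rule continuous_compact_support_pairI[OF continuous_d_x, of B]) (use vanishing_far in blast)

lemma has_real_derivative_along_line:
  "((\<lambda>t. \<phi> (t, y + c * t)) has_real_derivative
      d_t \<phi> (t, y + c * t) + c * d_x \<phi> (t, y + c * t)) (at t)"
proof -
  have "((\<lambda>t. (t, y + c * t)) has_derivative (\<lambda>h. (h, c * h))) (at t)"
    by (auto intro!: derivative_eq_intros)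
  from has_derivative_compose[OF this has_derivative]
  have "((\<lambda>t. \<phi> (t, y + c * t)) has_derivative
          (\<lambda>h. frechet_derivative \<phi> (at (t, y + c * t)) (h, c * h))) (at t)" .
  moreover have "(\<lambda>h. frechet_derivative \<phi> (at (t, y + c * t)) (h, c * h))
      = (\<lambda>h. (d_t \<phi> (t, y + c * t) + c * d_x \<phi> (t, y + c * t)) * h)"
    by (auto simp: frechet_derivative_eq algebra_simps)
  ultimately show ?thesis unfolding has_field_derivative_def by simp
qed

lemma has_real_derivative_x: "((\<lambda>x. \<phi> (t, x)) has_real_derivative d_x \<phi> (t, x)) (at x)"
proof -
  have "((\<lambda>x. (t, x)) has_derivative (\<lambda>h. (0, h))) (at x)"
    by (auto intro!: derivative_eq_intros)
  from has_derivative_compose[OF this has_derivative]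
  have "((\<lambda>x. \<phi> (t, x)) has_derivative (\<lambda>h. frechet_derivative \<phi> (at (t, x)) (0, h))) (at x)" .
  moreover have "(\<lambda>h. frechet_derivative \<phi> (at (t, x)) (0, h)) = (\<lambda>h. d_x \<phi> (t, x) * h)"
    by (auto simp: frechet_derivative_eq)
  ultimately show ?thesis unfolding has_field_derivative_def by simp
qed

definition ray_integral :: "real \<Rightarrow> real" where
  "ray_integral c = (\<integral>t. \<phi> (t, c * t) \<partial>lborel)"

definition lower_mass :: "real \<Rightarrow> real" where
  "lower_mass c = (\<integral>z. indicator (below_line c) z * \<phi> z \<partial>lborel)"

definition ray_moment :: "real \<Rightarrow> real" where
  "ray_moment c = (\<integral>t. indicator {0<..} t * t * \<phi> (t, c * t) \<partial>lborel)"

lemma continuous_on_d_x_slice: "continuous_on UNIV (\<lambda>x. d_x \<phi> (t, x))"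
  by (rule continuous_on_compose2[OF continuous_d_x]) (auto intro: continuous_intros)

lemma integral_below_line_d_x:
  "(\<integral>z. indicator (below_line c) z * d_x \<phi> z \<partial>lborel) = ray_integral c"
proof -
  have "integrable lborel (\<lambda>z. indicator (below_line c) z * d_x \<phi> z)"
    by (simp add: integrable_indicator_mult_continuous_compact_support continuous_compact_support_d_x)
  then have "(\<integral>z. indicator (below_line c) z * d_x \<phi> z \<partial>lborel)
     = (\<integral>t. (\<integral>x. indicator {..<c * t} x * d_x \<phi> (t,x) \<partial>lborel) \<partial>lborel)"
    by (simp add: integral_lborel_pair_fst indicator_def)
  also have "\<dots> = ray_integral c"
    unfolding ray_integral_def
  proof (rule Bochner_Integration.integral_cong[OF refl])
    show "(\<integral>x. indicator {..<c * t} x * d_x \<phi> (t,x) \<partial>lborel) = \<phi> (t, c * t)" for t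
      by (rule integral_lessThan_derivative[OF has_real_derivative_x continuous_on_d_x_slice, where R=B])
         (use vanishing_far in auto)
  qed
  finally show ?thesis .
qed

lemma integral_d_x: "(\<integral>z. d_x \<phi> z \<partial>lborel) = 0"
proof -
  have "(\<integral>z. d_x \<phi> z \<partial>lborel) = (\<integral>t. (\<integral>x. d_x \<phi> (t,x) \<partial>lborel) \<partial>lborel)"
    by (rule integral_lborel_pair_fst(1)[OF integrable_continuous_compact_support[OF continuous_compact_support_d_x]])
  also have "\<dots> = (\<integral>(t::real). 0 \<partial>lborel)"
  proof (rule Bochner_Integration.integral_cong[OF refl])
    show "(\<integral>x. d_x \<phi> (t,x) \<partial>lborel) = 0" for t
      by (rule integral_derivative_eq_0[OF has_real_derivative_x continuous_on_d_x_slice, where R=B])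
         (use vanishing_far in auto)
  qed
  finally show ?thesis by simp
qed

lemma continuous_on_transport: "continuous_on UNIV (\<lambda>z. d_t \<phi> z + c * d_x \<phi> z)"
  by (intro continuous_intros continuous_d_t continuous_d_x)

lemma integral_transport_along_line:
  "(\<integral>t. d_t \<phi> (t, y + c * t) + c * d_x \<phi> (t, y + c * t) \<partial>lborel) = 0"
proof (rule integral_derivative_eq_0[where g="\<lambda>t. \<phi> (t, y + c * t)" and R="B + \<bar>c\<bar> * B"])
  show "continuous_on UNIV (\<lambda>t. d_t \<phi> (t, y + c * t) + c * d_x \<phi> (t, y + c * t))"
    by (rule continuous_on_compose2[OF continuous_on_transport]) (auto intro!: continuous_intros)
qed (use has_real_derivative_along_line vanishing_sheared in auto)

text \<open>The transport derivative \<open>\<phi>\<^sub>t + c \<phi>\<^sub>x\<close> integrates to zero against any function of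
  \<open>x - c t\<close>: after the shear \<open>x = y + c t\<close> it is the \<open>t\<close>-derivative of \<open>\<phi>(t, y + c t)\<close>.\<close>

lemma integral_transport_derivative:
  assumes S: "S \<in> sets borel"
  shows "(\<integral>z. indicator S (snd z - c * fst z) * (d_t \<phi> z + c * d_x \<phi> z) \<partial>lborel) = 0"
proof -
  define F where "F z = d_t \<phi> z + c * d_x \<phi> z" for z
  have "continuous_compact_support F"
    by (rule continuous_compact_support_pairI[OF continuous_on_transport[of c, folded F_def], of B])
       (use vanishing_far in \<open>auto simp: F_def\<close>)
  moreover have "{z. snd z - c * fst z \<in> S} \<in> sets borel"
    using sets_borel_linear_preimage[OF S, of "-c" 1] by simp
  ultimately have int: "integrable lborel (\<lambda>z. indicator S (snd z - c * fst z) * F z)"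
    using integrable_indicator_mult_continuous_compact_support[of F "{z. snd z - c * fst z \<in> S}"]
    by (simp add: indicator_def)
  have "continuous_compact_support (\<lambda>z. F (fst z, snd z + c * fst z))"
  proof (rule continuous_compact_support_pairI[of _ "B + \<bar>c\<bar> * B"])
    show "continuous_on UNIV (\<lambda>z. F (fst z, snd z + c * fst z))" unfolding F_def
      by (rule continuous_on_compose2[OF continuous_on_transport]) (auto intro!: continuous_intros)
  qed (use vanishing_sheared in \<open>auto simp: F_def\<close>)
  then have int_shear: "integrable lborel (\<lambda>z. indicator S (snd z) * F (fst z, snd z + c * fst z))"
    using integrable_indicator_mult_continuous_compact_support[of _ "{z. snd z \<in> S}"]
      sets_borel_linear_preimage[OF S, of 0 1] by (simp add: indicator_def)
  have "(\<integral>z. indicator S (snd z - c * fst z) * F z \<partial>lborel)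
      = (\<integral>y. indicator S y * (\<integral>t. F (t, y + c * t) \<partial>lborel) \<partial>lborel)"
    using integral_lborel_shear[OF int, of c] int_shear by simp
  then show ?thesis using integral_transport_along_line unfolding F_def by simp
qed

lemma integral_d_t: "(\<integral>z. d_t \<phi> z \<partial>lborel) = 0"
  using integral_transport_derivative[of UNIV 0] by simp

lemma integral_below_line_d_t:
  "(\<integral>z. indicator (below_line c) z * d_t \<phi> z \<partial>lborel) = - c * ray_integral c"
proof -
  have "(\<lambda>z. indicator {..<0} (snd z - c * fst z) * (d_t \<phi> z + c * d_x \<phi> z))
     = (\<lambda>z. indicator (below_line c) z * d_t \<phi> z + c * (indicator (below_line c) z * d_x \<phi> z))"
    by (auto simp: indicator_def fun_eq_iff)
  moreover have "integrable lborel (\<lambda>z. indicator (below_line c) z * d_t \<phi> z)"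
    "integrable lborel (\<lambda>z. indicator (below_line c) z * d_x \<phi> z)"
    by (simp_all add: integrable_indicator_mult_continuous_compact_support
        continuous_compact_support_d_t continuous_compact_support_d_x)
  ultimately show ?thesis
    using integral_transport_derivative[of "{..<0}" c] by (simp add: integral_below_line_d_x)
qed

lemma pair_fn_jump: "pair_fn (jump c a b) \<phi> = b * (\<integral>z. \<phi> z \<partial>lborel) + (a - b) * lower_mass c"
  unfolding lower_mass_def
  by (intro pair_fn_jump_eq integrable_continuous_compact_support
      integrable_indicator_mult_continuous_compact_support continuous_compact_support) simp

lemma pair_fn_jump_d_t: "pair_fn (jump c a b) (d_t \<phi>) = - c * (a - b) * ray_integral c"
  by (subst pair_fn_jump_eq)
     (simp_all add: integral_d_t integral_below_line_d_t integrable_continuous_compact_support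
      integrable_indicator_mult_continuous_compact_support continuous_compact_support_d_t)

lemma pair_fn_jump_d_x: "pair_fn (jump c a b) (d_x \<phi>) = (a - b) * ray_integral c"
  by (subst pair_fn_jump_eq)
     (simp_all add: integral_d_x integral_below_line_d_x integrable_continuous_compact_support
      integrable_indicator_mult_continuous_compact_support continuous_compact_support_d_x)

lemma vanishing_ray:
  "\<bar>t\<bar> > B + \<bar>c\<bar> * B \<Longrightarrow> \<phi> (t, c * t) = 0 \<and> d_t \<phi> (t, c * t) = 0 \<and> d_x \<phi> (t, c * t) = 0"
  using vanishing_sheared[where t=t and c=c and y=0] by simp

lemma continuous_on_ray:
  "continuous_on UNIV (\<lambda>t. \<phi> (t, c * t))"
  "continuous_on UNIV (\<lambda>t. d_t \<phi> (t, c * t))"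
  "continuous_on UNIV (\<lambda>t. d_x \<phi> (t, c * t))"
  by (rule continuous_on_compose2[OF continuous] continuous_on_compose2[OF continuous_d_t]
      continuous_on_compose2[OF continuous_d_x]; auto intro!: continuous_intros)+

lemma pair_delta_transport:
  "pair_delta (\<lambda>t. k * t) c (\<lambda>z. d_t \<phi> z + c * d_x \<phi> z) = - k * ray_integral c"
proof -
  define p where "p t = d_t \<phi> (t, c * t) + c * d_x \<phi> (t, c * t)" for t
  have cont_p: "continuous_on UNIV p"
    unfolding p_def[abs_def] using continuous_on_ray by (intro continuous_intros) auto
  have p_far: "\<bar>t\<bar> > B + \<bar>c\<bar> * B \<Longrightarrow> \<phi> (t, c * t) = 0 \<and> p t = 0" for t
    using vanishing_ray unfolding p_def by simp
  have "(\<lambda>t. indicator {0<..} t * (k * t) * p t) = (\<lambda>t. k * (t * p t))"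
  proof
    show "indicator {0<..} t * (k * t) * p t = k * (t * p t)" for t
      using vanishing[of "(t, c * t)"] by (cases "t > 0") (auto simp: p_def)
  qed
  then have delta_eq: "pair_delta (\<lambda>t. k * t) c (\<lambda>z. d_t \<phi> z + c * d_x \<phi> z) = k * (\<integral>t. t * p t \<partial>lborel)"
    unfolding pair_delta_def p_def[symmetric] by simp
  have "((\<lambda>t. t * \<phi> (t, c * t)) has_real_derivative \<phi> (t, c * t) + t * p t) (at t)" for t
    using DERIV_mult[OF DERIV_ident has_real_derivative_along_line[of 0 c t]]
    by (simp add: p_def mult.commute)
  moreover have "continuous_on UNIV (\<lambda>t. \<phi> (t, c * t) + t * p t)"
    using continuous_on_ray cont_p by (auto intro!: continuous_intros)
  ultimately have "(\<integral>t. \<phi> (t, c * t) + t * p t \<partial>lborel) = 0"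
    using p_far by (intro integral_derivative_eq_0[where g="\<lambda>t. t * \<phi> (t, c * t)" and R="B + \<bar>c\<bar> * B"]) auto
  moreover have "continuous_compact_support (\<lambda>t. \<phi> (t, c * t))"
    "continuous_compact_support (\<lambda>t. t * p t)"
    by (rule continuous_compact_support_realI[of _ "B + \<bar>c\<bar> * B"];
        use continuous_on_ray cont_p p_far in \<open>auto intro!: continuous_intros\<close>)+
  ultimately have "(\<integral>t. t * p t \<partial>lborel) = - ray_integral c"
    unfolding ray_integral_def by (simp add: integrable_continuous_compact_support)
  then show ?thesis unfolding delta_eq by simp
qed

lemma jump_weak_solution:
  assumes "c * (a - b) = fa - fb"
  shows "pair_fn (jump c a b) (d_t \<phi>) + pair_fn (jump c fa fb) (d_x \<phi>) = 0"
  unfolding pair_fn_jump_d_t pair_fn_jump_d_x assms[symmetric] by simp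

lemma jump_delta_weak_solution:
  assumes "k = fa - fb - c * (a - b)"
  shows "pair_fn (jump c a b) (d_t \<phi>) + pair_fn (jump c fa fb) (d_x \<phi>)
           + pair_delta (\<lambda>t. k * t) c (\<lambda>z. d_t \<phi> z + c * d_x \<phi> z) = 0"
  unfolding pair_fn_jump_d_t pair_fn_jump_d_x pair_delta_transport assms by (simp add: algebra_simps)

lemma uniformly_continuous_in_x:
  assumes "\<epsilon> > 0"
  obtains \<delta> where "\<delta> > 0" "\<And>t x x'. \<bar>x - x'\<bar> < \<delta> \<Longrightarrow> \<bar>\<phi> (t, x) - \<phi> (t, x')\<bar> < \<epsilon>"
proof -
  define K where "K = cbox (-(B + 1), -(B + 1)) (B + 1, B + 1)"
  have "uniformly_continuous_on K \<phi>"
    unfolding K_def by (rule compact_uniformly_continuous[OF continuous_on_subset[OF continuous]]) auto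
  then obtain \<delta>0 where \<delta>0: "\<delta>0 > 0"
    and uc: "\<And>z z'. z \<in> K \<Longrightarrow> z' \<in> K \<Longrightarrow> dist z' z < \<delta>0 \<Longrightarrow> dist (\<phi> z') (\<phi> z) < \<epsilon>"
    unfolding uniformly_continuous_on_def using assms by metis
  show ?thesis
  proof (rule that[of "min 1 \<delta>0"])
    fix t x x' assume close: "\<bar>x - x'\<bar> < min 1 \<delta>0"
    show "\<bar>\<phi> (t, x) - \<phi> (t, x')\<bar> < \<epsilon>"
    proof (cases "(t, x) \<in> K \<and> (t, x') \<in> K")
      case True
      then show ?thesis using uc[of "(t, x')" "(t, x)"] close by (simp add: dist_Pair_Pair dist_real_def)
    next
      case False
      then have "\<bar>t\<bar> > B \<or> (\<bar>x\<bar> > B \<and> \<bar>x'\<bar> > B)"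
        using close unfolding K_def by (auto simp: cbox_Pair_iff abs_le_iff)
      then show ?thesis using vanishing_far[of "(t, x)"] vanishing_far[of "(t, x')"] assms by auto
    qed
  qed (simp add: \<delta>0)
qed

lemma lower_mass_diff_eq_integral:
  fixes c1 c2 :: real
  defines "I \<equiv> \<lambda>t. \<integral>x. (indicator (below_line c2) (t, x) - indicator (below_line c1) (t, x)) * \<phi> (t, x) \<partial>lborel"
  shows "lower_mass c2 - lower_mass c1 = (\<integral>t. I t \<partial>lborel)" and "integrable lborel I"
proof -
  have int: "integrable lborel (\<lambda>z. indicator (below_line c) z * \<phi> z)" for c
    by (simp add: integrable_indicator_mult_continuous_compact_support continuous_compact_support)
  then have "integrable lborel (\<lambda>z. (indicator (below_line c2) z - indicator (below_line c1) z) * \<phi> z)"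
    by (simp add: left_diff_distrib)
  from integral_lborel_pair_fst[OF this] int
  show "lower_mass c2 - lower_mass c1 = (\<integral>t. I t \<partial>lborel)" and "integrable lborel I"
    unfolding lower_mass_def I_def by (simp_all add: left_diff_distrib)
qed

lemma lower_mass_fiber_estimate:
  assumes close: "\<And>x. c1 * t \<le> x \<Longrightarrow> x < c2 * t \<Longrightarrow> \<bar>\<phi> (t, x) - \<phi> (t, \<sigma> * t)\<bar> \<le> e"
    and c12: "c1 \<le> c2" and t: "0 < t" "t \<le> B" and e: "e \<ge> 0"
  shows "\<bar>(\<integral>x. (indicator (below_line c2) (t, x) - indicator (below_line c1) (t, x)) * \<phi> (t, x) \<partial>lborel)
          - (c2 - c1) * (indicator {0<..} t * t * \<phi> (t, \<sigma> * t))\<bar> \<le> e * (c2 - c1) * B"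
proof -
  define J where "J = {c1 * t..<c2 * t}"
  have ct: "c1 * t \<le> c2 * t" using c12 t by (simp add: mult_right_mono)
  have measure_J: "measure lborel J = (c2 - c1) * t" unfolding J_def using ct by (simp add: algebra_simps)
  have fiber: "(indicator (below_line c2) (t, x) - indicator (below_line c1) (t, x)) * \<phi> (t, x)
      = indicator J x * \<phi> (t, x)" for x
    unfolding J_def using ct by (auto simp: indicator_def)
  have "continuous_compact_support (\<lambda>x. \<phi> (t, x))"
    by (rule continuous_compact_support_realI[of _ B])
       (use vanishing_far in \<open>auto intro!: continuous_on_compose2[OF continuous] continuous_intros\<close>)
  then have int_\<phi>: "integrable lborel (\<lambda>x. indicator J x * \<phi> (t, x))"
    by (rule integrable_indicator_mult_continuous_compact_support) (simp add: J_def)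
  have int_J: "integrable lborel (indicator J :: real \<Rightarrow> real)"
    unfolding J_def using ct by (intro integrable_real_indicator) auto
  have "(c2 - c1) * (indicator {0<..} t * t * \<phi> (t, \<sigma> * t)) = (\<integral>x. indicator J x * \<phi> (t, \<sigma> * t) \<partial>lborel)"
    using t measure_J by simp
  then have "(\<integral>x. (indicator (below_line c2) (t, x) - indicator (below_line c1) (t, x)) * \<phi> (t, x) \<partial>lborel)
          - (c2 - c1) * (indicator {0<..} t * t * \<phi> (t, \<sigma> * t))
        = (\<integral>x. indicator J x * (\<phi> (t, x) - \<phi> (t, \<sigma> * t)) \<partial>lborel)"
    unfolding fiber using int_\<phi> int_J by (simp add: algebra_simps)
  also have "\<bar>\<dots>\<bar> \<le> (\<integral>x. indicator J x * e \<partial>lborel)"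
  proof (rule integral_abs_bound_integral)
    show "integrable lborel (\<lambda>x. indicator J x * (\<phi> (t, x) - \<phi> (t, \<sigma> * t)))"
      using int_\<phi> int_J by (simp add: algebra_simps)
    show "\<bar>indicator J x * (\<phi> (t, x) - \<phi> (t, \<sigma> * t))\<bar> \<le> indicator J x * e" for x
      using close[of x] e unfolding J_def by (auto simp: indicator_def)
  qed (use int_J in simp)
  also have "\<dots> = e * ((c2 - c1) * t)" using measure_J by simp
  also have "\<dots> \<le> e * (c2 - c1) * B"
    using e c12 t by (simp add: mult_left_mono mult.assoc)
  finally show ?thesis .
qed

lemma integrable_ray_moment_integrand:
  "integrable lborel (\<lambda>t. indicator {0<..} t * t * \<phi> (t, c * t))"
proof -
  have "continuous_compact_support (\<lambda>t. t * \<phi> (t, c * t))"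
    by (rule continuous_compact_support_realI[of _ "B + \<bar>c\<bar> * B"])
       (use continuous_on_ray vanishing_ray in \<open>auto intro!: continuous_intros\<close>)
  from integrable_indicator_mult_continuous_compact_support[OF this, of "{0<..}"]
  show ?thesis by (simp add: mult.assoc)
qed

lemma lower_mass_strict_derivative:
  assumes "\<epsilon> > 0"
  obtains \<eta> where "\<eta> > 0" and "\<And>c1 c2. \<bar>c1 - \<sigma>\<bar> \<le> \<eta> \<Longrightarrow> \<bar>c2 - \<sigma>\<bar> \<le> \<eta> \<Longrightarrow> c1 \<le> c2 \<Longrightarrow>
      \<bar>lower_mass c2 - lower_mass c1 - (c2 - c1) * ray_moment \<sigma>\<bar> \<le> \<epsilon> * (c2 - c1)"
proof -
  define e where "e = \<epsilon> / (B * B)"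
  have e_pos: "e > 0" unfolding e_def using assms B_pos by simp
  obtain \<delta> where \<delta>: "\<delta> > 0" and uc: "\<And>t x x'. \<bar>x - x'\<bar> < \<delta> \<Longrightarrow> \<bar>\<phi> (t, x) - \<phi> (t, x')\<bar> < e"
    using uniformly_continuous_in_x[OF e_pos] by blast
  show ?thesis
  proof (rule that[of "\<delta> / (2 * B)"])
    fix c1 c2 assume c1: "\<bar>c1 - \<sigma>\<bar> \<le> \<delta> / (2 * B)" and c2: "\<bar>c2 - \<sigma>\<bar> \<le> \<delta> / (2 * B)" and "c1 \<le> c2"
    define I where "I t = (\<integral>x. (indicator (below_line c2) (t, x) - indicator (below_line c1) (t, x)) * \<phi> (t, x) \<partial>lborel)" for t
    define m where "m t = indicator {0<..} t * t * \<phi> (t, \<sigma> * t)" for t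
    have fiber: "\<bar>I t - (c2 - c1) * m t\<bar> \<le> indicator {0<..B} t * (e * (c2 - c1) * B)" for t
    proof (cases "0 < t \<and> t \<le> B")
      case True
      have "\<bar>\<phi> (t, x) - \<phi> (t, \<sigma> * t)\<bar> \<le> e" if "c1 * t \<le> x" "x < c2 * t" for x
      proof -
        have "\<bar>x - \<sigma> * t\<bar> \<le> \<delta> / (2 * B) * B"
          using abs_between_rays_le[OF c1 c2 _ _ that(1) less_imp_le[OF that(2)], of B] True by auto
        then show ?thesis using uc[of x "\<sigma> * t" t] \<delta> B_pos by simp
      qed
      then show ?thesis
        using lower_mass_fiber_estimate[OF _ \<open>c1 \<le> c2\<close>, of t \<sigma> e] True e_pos
        unfolding I_def m_def by simp
    next
      case False
      then have "\<phi> (t, x) = 0" for x using vanishing[of "(t, x)"] by auto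
      then show ?thesis using False unfolding I_def m_def by (auto simp: indicator_def)
    qed
    have "lower_mass c2 - lower_mass c1 - (c2 - c1) * ray_moment \<sigma> = (\<integral>t. I t - (c2 - c1) * m t \<partial>lborel)"
      using lower_mass_diff_eq_integral[of c2 c1] integrable_ray_moment_integrand[of \<sigma>]
      unfolding I_def m_def ray_moment_def by simp
    also have "\<bar>\<dots>\<bar> \<le> (\<integral>t. indicator {0<..B} t * (e * (c2 - c1) * B) \<partial>lborel)"
      using fiber lower_mass_diff_eq_integral(2)[of c2 c1] integrable_ray_moment_integrand[of \<sigma>]
        integrable_real_indicator[of "{0<..B}" lborel] B_pos
      by (intro integral_abs_bound_integral) (auto simp: I_def m_def)
    also have "\<dots> = \<epsilon> * (c2 - c1)" using B_pos by (simp add: e_def)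
    finally show "\<bar>lower_mass c2 - lower_mass c1 - (c2 - c1) * ray_moment \<sigma>\<bar> \<le> \<epsilon> * (c2 - c1)" .
  qed (use \<delta> B_pos in simp)
qed

lemma isCont_lower_mass: "isCont lower_mass \<sigma>"
proof -
  obtain \<eta> where \<eta>: "\<eta> > 0" and strict: "\<And>c1 c2. \<bar>c1 - \<sigma>\<bar> \<le> \<eta> \<Longrightarrow> \<bar>c2 - \<sigma>\<bar> \<le> \<eta> \<Longrightarrow> c1 \<le> c2 \<Longrightarrow>
      \<bar>lower_mass c2 - lower_mass c1 - (c2 - c1) * ray_moment \<sigma>\<bar> \<le> 1 * (c2 - c1)"
    using lower_mass_strict_derivative[of 1 \<sigma>] by auto
  have bound: "\<bar>lower_mass c - lower_mass \<sigma>\<bar> \<le> \<bar>c - \<sigma>\<bar> * (\<bar>ray_moment \<sigma>\<bar> + 1)"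
    if "\<bar>c - \<sigma>\<bar> \<le> \<eta>" for c
  proof -
    have slope: "\<bar>(c2 - c1) * ray_moment \<sigma>\<bar> \<le> (c2 - c1) * \<bar>ray_moment \<sigma>\<bar>" if "c1 \<le> c2" for c1 c2
      using that by (simp add: abs_mult)
    show ?thesis
    proof (cases "\<sigma> \<le> c")
      case True
      then show ?thesis using strict[OF _ that True] slope[OF True] \<eta> by (simp add: algebra_simps abs_le_iff)
    next
      case False
      then show ?thesis using strict[OF that _, of \<sigma>] slope[of c \<sigma>] \<eta> by (simp add: algebra_simps abs_le_iff)
    qed
  qed
  have "((\<lambda>c. lower_mass c - lower_mass \<sigma>) \<longlongrightarrow> 0) (at \<sigma>)"
  proof (rule Lim_null_comparison)
    show "\<forall>\<^sub>F c in at \<sigma>. norm (lower_mass c - lower_mass \<sigma>) \<le> \<bar>c - \<sigma>\<bar> * (\<bar>ray_moment \<sigma>\<bar> + 1)"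
      using \<eta> bound by (auto simp: eventually_at dist_real_def intro!: exI[of _ \<eta>])
    show "((\<lambda>c. \<bar>c - \<sigma>\<bar> * (\<bar>ray_moment \<sigma>\<bar> + 1)) \<longlongrightarrow> 0) (at \<sigma>)"
      by (auto intro!: tendsto_eq_intros)
  qed
  then show ?thesis unfolding isCont_def by (simp add: LIM_zero_iff)
qed

lemma tendsto_scaled_lower_mass_difference:
  assumes c1: "(c1 \<longlongrightarrow> \<sigma>) F" and c2: "(c2 \<longlongrightarrow> \<sigma>) F" and lt: "\<forall>\<^sub>F e in F. c1 e < c2 e"
    and width: "((\<lambda>e. s e * (c2 e - c1 e)) \<longlongrightarrow> L) F"
  shows "((\<lambda>e. s e * (lower_mass (c2 e) - lower_mass (c1 e))) \<longlongrightarrow> L * ray_moment \<sigma>) F"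
proof -
  define r where "r e = (lower_mass (c2 e) - lower_mass (c1 e)) / (c2 e - c1 e) - ray_moment \<sigma>" for e
  have "(r \<longlongrightarrow> 0) F"
  proof (rule tendstoI)
    fix \<epsilon> :: real assume "\<epsilon> > 0"
    then obtain \<eta> where \<eta>: "\<eta> > 0" and strict: "\<And>c1 c2. \<bar>c1 - \<sigma>\<bar> \<le> \<eta> \<Longrightarrow> \<bar>c2 - \<sigma>\<bar> \<le> \<eta> \<Longrightarrow> c1 \<le> c2 \<Longrightarrow>
        \<bar>lower_mass c2 - lower_mass c1 - (c2 - c1) * ray_moment \<sigma>\<bar> \<le> \<epsilon> / 2 * (c2 - c1)"
      using lower_mass_strict_derivative[of "\<epsilon> / 2" \<sigma>] by auto
    show "\<forall>\<^sub>F e in F. dist (r e) 0 < \<epsilon>"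
      using tendstoD[OF c1 \<eta>] tendstoD[OF c2 \<eta>] lt
    proof eventually_elim
      case (elim e)
      then have "\<bar>lower_mass (c2 e) - lower_mass (c1 e) - (c2 e - c1 e) * ray_moment \<sigma>\<bar> \<le> \<epsilon> / 2 * (c2 e - c1 e)"
        by (intro strict) (auto simp: dist_real_def)
      moreover have "r e = (lower_mass (c2 e) - lower_mass (c1 e) - (c2 e - c1 e) * ray_moment \<sigma>) / (c2 e - c1 e)"
        unfolding r_def using elim by (simp add: field_simps)
      ultimately have "\<bar>r e\<bar> \<le> \<epsilon> / 2" using elim by (simp add: abs_div pos_divide_le_eq)
      then show ?case using \<open>\<epsilon> > 0\<close> by simp
    qed
  qed
  then have "((\<lambda>e. s e * (c2 e - c1 e) * (ray_moment \<sigma> + r e)) \<longlongrightarrow> L * (ray_moment \<sigma> + 0)) F"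
    by (intro tendsto_intros width)
  moreover have "\<forall>\<^sub>F e in F. s e * (c2 e - c1 e) * (ray_moment \<sigma> + r e) = s e * (lower_mass (c2 e) - lower_mass (c1 e))"
    using lt by eventually_elim (simp add: r_def field_simps)
  ultimately show ?thesis by (simp add: tendsto_cong)
qed

lemma pair_fn_three_state:
  assumes "c1 < c2"
  shows "pair_fn (three_state c1 c2 a1 a2 a3) \<phi> = a3 * (\<integral>z. \<phi> z \<partial>lborel) + (a1 - a3) * lower_mass c1
           + (a2 - a3) * (lower_mass c2 - lower_mass c1)"
proof -
  have "three_state c1 c2 a1 a2 a3 z * \<phi> z = a3 * \<phi> z + (a1 - a3) * (indicator (below_line c1) z * \<phi> z)
      + (a2 - a3) * (indicator (below_line c2) z * \<phi> z - indicator (below_line c1) z * \<phi> z)" for z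
  proof (cases "fst z > 0")
    case True
    then show ?thesis unfolding three_state_eq_indicator[OF assms True] by (simp add: algebra_simps)
  qed (use vanishing in auto)
  then show ?thesis
    unfolding pair_fn_def lower_mass_def
    by (simp add: integrable_continuous_compact_support continuous_compact_support
        integrable_indicator_mult_continuous_compact_support)
qed

lemma tendsto_pair_fn_three_state:
  assumes c1: "(c1 \<longlongrightarrow> \<sigma>) F" and c2: "(c2 \<longlongrightarrow> \<sigma>) F" and lt: "\<forall>\<^sub>F e in F. c1 e < c2 e"
    and a1: "(a1 \<longlongrightarrow> \<alpha>) F" and width: "((\<lambda>e. (a2 e - a3) * (c2 e - c1 e)) \<longlongrightarrow> L) F"
  shows "((\<lambda>e. pair_fn (three_state (c1 e) (c2 e) (a1 e) (a2 e) a3) \<phi>) \<longlongrightarrow>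
           a3 * (\<integral>z. \<phi> z \<partial>lborel) + (\<alpha> - a3) * lower_mass \<sigma> + L * ray_moment \<sigma>) F"
proof -
  have "((\<lambda>e. a3 * (\<integral>z. \<phi> z \<partial>lborel) + (a1 e - a3) * lower_mass (c1 e)
           + (a2 e - a3) * (lower_mass (c2 e) - lower_mass (c1 e))) \<longlongrightarrow>
         a3 * (\<integral>z. \<phi> z \<partial>lborel) + (\<alpha> - a3) * lower_mass \<sigma> + L * ray_moment \<sigma>) F"
    by (intro tendsto_intros a1 isCont_tendsto_compose[OF isCont_lower_mass c1]
        tendsto_scaled_lower_mass_difference[OF c1 c2 lt width])
  moreover have "\<forall>\<^sub>F e in F. pair_fn (three_state (c1 e) (c2 e) (a1 e) (a2 e) a3) \<phi>
      = a3 * (\<integral>z. \<phi> z \<partial>lborel) + (a1 e - a3) * lower_mass (c1 e)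
           + (a2 e - a3) * (lower_mass (c2 e) - lower_mass (c1 e))"
    using lt by eventually_elim (rule pair_fn_three_state)
  ultimately show ?thesis by (simp add: tendsto_cong)
qed

lemma pair_delta_linear: "pair_delta (\<lambda>t. k * t) c \<phi> = k * ray_moment c"
  unfolding pair_delta_def ray_moment_def by (simp add: algebra_simps flip: integral_mult_right_zero)

lemma tendsto_pair_fn_two_shock:
  assumes state: "\<forall>\<^sub>F e1 in at_right 0. two_shock_state e1 e2 um vm up vp (vs e1)"
    and \<sigma>1: "((\<lambda>e1. sigma1 e1 e2 um vm (vs e1)) \<longlongrightarrow> \<sigma>) (at_right 0)"
    and \<sigma>2: "((\<lambda>e1. sigma2 e1 e2 um vm up vp (vs e1)) \<longlongrightarrow> \<sigma>) (at_right 0)"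
    and ustar: "((\<lambda>e1. ustar e1 e2 um vm (vs e1)) \<longlongrightarrow> u\<^sub>\<delta>) (at_right 0)"
    and width: "((\<lambda>e1. vs e1 * (sigma2 e1 e2 um vm up vp (vs e1) - sigma1 e1 e2 um vm (vs e1))) \<longlongrightarrow> k)
                  (at_right 0)"
  shows "((\<lambda>e1. pair_fn (two_shock_u e1 e2 um vm up vp (vs e1)) \<phi>) \<longlongrightarrow> pair_fn (jump \<sigma> um up) \<phi>)
           (at_right 0)"
    and "((\<lambda>e1. pair_fn (two_shock_v e1 e2 um vm up vp (vs e1)) \<phi>)
           \<longlongrightarrow> pair_fn (jump \<sigma> vm vp) \<phi> + pair_delta (\<lambda>t. k * t) \<sigma> \<phi>) (at_right 0)"
proof -
  have ordered: "\<forall>\<^sub>F e1 in at_right 0. sigma1 e1 e2 um vm (vs e1) < sigma2 e1 e2 um vm up vp (vs e1)"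
    using state by (rule eventually_mono) (unfold two_shock_state_def, blast)
  have "((\<lambda>e1. (ustar e1 e2 um vm (vs e1) - up) * (sigma2 e1 e2 um vm up vp (vs e1) - sigma1 e1 e2 um vm (vs e1)))
      \<longlongrightarrow> (u\<^sub>\<delta> - up) * (\<sigma> - \<sigma>)) (at_right 0)"
    by (intro tendsto_intros ustar \<sigma>1 \<sigma>2)
  from tendsto_pair_fn_three_state[OF \<sigma>1 \<sigma>2 ordered tendsto_const this]
  show "((\<lambda>e1. pair_fn (two_shock_u e1 e2 um vm up vp (vs e1)) \<phi>) \<longlongrightarrow> pair_fn (jump \<sigma> um up) \<phi>)
           (at_right 0)"
    by (simp add: two_shock_u_eq_three_state pair_fn_jump)
  have "((\<lambda>e1. vs e1 * (sigma2 e1 e2 um vm up vp (vs e1) - sigma1 e1 e2 um vm (vs e1))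
         - vp * (sigma2 e1 e2 um vm up vp (vs e1) - sigma1 e1 e2 um vm (vs e1))) \<longlongrightarrow> k - vp * (\<sigma> - \<sigma>)) (at_right 0)"
    by (intro tendsto_intros width \<sigma>1 \<sigma>2)
  then have "((\<lambda>e1. (vs e1 - vp) * (sigma2 e1 e2 um vm up vp (vs e1) - sigma1 e1 e2 um vm (vs e1))) \<longlongrightarrow> k)
      (at_right 0)"
    by (simp add: left_diff_distrib)
  from tendsto_pair_fn_three_state[OF \<sigma>1 \<sigma>2 ordered tendsto_const this]
  show "((\<lambda>e1. pair_fn (two_shock_v e1 e2 um vm up vp (vs e1)) \<phi>)
           \<longlongrightarrow> pair_fn (jump \<sigma> vm vp) \<phi> + pair_delta (\<lambda>t. k * t) \<sigma> \<phi>) (at_right 0)"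
    by (simp add: two_shock_v_eq_three_state pair_fn_jump pair_delta_linear)
qed

end

section \<open>Asymptotics of the two-shock solution\<close>

lemma sqrt_sum_squares_lipschitz: "\<bar>sqrt (a\<^sup>2 + x\<^sup>2) - sqrt (a\<^sup>2 + y\<^sup>2)\<bar> \<le> \<bar>x - y\<bar>"
proof -
  have "sqrt (a\<^sup>2 + x\<^sup>2) \<le> sqrt (a\<^sup>2 + y\<^sup>2) + \<bar>x - y\<bar>" for x y :: real
    using real_sqrt_sum_squares_triangle_ineq[of a 0 y "x - y"] by simp
  from this[of x y] this[of y x] show ?thesis by (simp add: abs_minus_commute)
qed

lemma four_mult_square_eq: "e \<ge> 0 \<Longrightarrow> 4 * e * z\<^sup>2 = (2 * sqrt e * z)\<^sup>2"
  by (simp add: power_mult_distrib)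

lemma sqrt_four_mult_lipschitz:
  assumes "e \<ge> 0"
  shows "\<bar>sqrt (a\<^sup>2 + 4 * e * x\<^sup>2) - sqrt (a\<^sup>2 + 4 * e * y\<^sup>2)\<bar> \<le> 2 * sqrt e * \<bar>x - y\<bar>"
proof -
  have "\<bar>sqrt (a\<^sup>2 + 4 * e * x\<^sup>2) - sqrt (a\<^sup>2 + 4 * e * y\<^sup>2)\<bar> \<le> \<bar>2 * sqrt e * x - 2 * sqrt e * y\<bar>"
    unfolding four_mult_square_eq[OF assms] by (rule sqrt_sum_squares_lipschitz)
  also have "\<dots> = 2 * sqrt e * \<bar>x - y\<bar>"
    using assms by (simp add: abs_mult flip: right_diff_distrib)
  finally show ?thesis .
qed

lemma two_shock_state_identities:
  fixes e e2 um vm up vp vs :: real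
  assumes state: "two_shock_state e e2 um vm up vp vs" and vm: "vm > 0" and vp: "vp > 0"
  defines "X \<equiv> sqrt (e2\<^sup>2 + 4 * e * (vs + vm)\<^sup>2) - e2"
    and "Y \<equiv> sqrt (e2\<^sup>2 + 4 * e * (vs + vp)\<^sup>2) + e2"
  shows "ustar e e2 um vm vs = um - (vs - vm) / (vs + vm) * X"
    and "um - up = (vs - vm) / (vs + vm) * X + (vs - vp) / (vs + vp) * Y"
    and "sigma1 e e2 um vm vs = um - vs / (vs + vm) * X - e2"
    and "sigma2 e e2 um vm up vp vs = up + vs / (vs + vp) * Y - e2"
    and "vs * (sigma2 e e2 um vm up vp vs - sigma1 e e2 um vm vs)
           = vp * (vs / (vs + vp) * Y) + vm * (vs / (vs + vm) * X)"
proof -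
  have vs: "vs > vm" "vs > vp" using state unfolding two_shock_state_def by auto
  then have pos: "vs + vm > 0" "vs + vp > 0" "vs - vm > 0" "vs - vp > 0" using vm vp by auto
  show ustar: "ustar e e2 um vm vs = um - (vs - vm) / (vs + vm) * X"
    unfolding ustar_def X_def using pos by (simp add: field_simps)
  have up_diff: "up - ustar e e2 um vm vs = (vp - vs) * (Y / (vs + vp))"
    using state unfolding two_shock_state_def Y_def by (simp add: add.commute)
  then have up: "up = ustar e e2 um vm vs - (vs - vp) / (vs + vp) * Y"
    by (simp add: algebra_simps diff_divide_distrib)
  then show D: "um - up = (vs - vm) / (vs + vm) * X + (vs - vp) / (vs + vp) * Y"
    using ustar by simp
  show \<sigma>1: "sigma1 e e2 um vm vs = um - vs / (vs + vm) * X - e2"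
  proof -
    have "(vs - vm) / (vs + vm) * X = (vs - vm) * (X / (vs + vm))" by simp
    then have "vs * (um - (vs - vm) / (vs + vm) * X - um) / (vs - vm) = - (vs / (vs + vm) * X)"
      using pos by simp
    then show ?thesis unfolding sigma1_def ustar by simp
  qed
  show \<sigma>2: "sigma2 e e2 um vm up vp vs = up + vs / (vs + vp) * Y - e2"
  proof -
    from up_diff have "vs * (up - ustar e e2 um vm vs) / (vp - vs) = vs / (vs + vp) * Y" using pos by simp
    then show ?thesis unfolding sigma2_def by simp
  qed
  show "vs * (sigma2 e e2 um vm up vp vs - sigma1 e e2 um vm vs)
           = vp * (vs / (vs + vp) * Y) + vm * (vs / (vs + vm) * X)"
  proof -
    define Za Zb where "Za = X / (vs + vm)" and "Zb = Y / (vs + vp)"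
    have h: "(vs - vm) / (vs + vm) * X = (vs - vm) * Za" "vs / (vs + vm) * X = vs * Za"
      "(vs - vp) / (vs + vp) * Y = (vs - vp) * Zb" "vs / (vs + vp) * Y = vs * Zb"
      unfolding Za_def Zb_def by simp_all
    have "sigma2 e e2 um vm up vp vs - sigma1 e e2 um vm vs = vp * Zb + vm * Za"
      using D unfolding \<sigma>1 \<sigma>2 h by (simp add: algebra_simps)
    then show ?thesis unfolding h by (simp add: algebra_simps)
  qed
qed

lemma two_shock_state_lower_bound:
  fixes e e2 um vm up vp vs :: real
  assumes state: "two_shock_state e e2 um vm up vp vs"
    and vm: "vm > 0" and vp: "vp > 0" and e: "e > 0" and e2: "e2 > 0"
  shows "(um - up - 2 * e2) / (4 * sqrt e) - (vm + vp) / 2 < vs"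
proof -
  define Ra Rb where "Ra = sqrt (e2\<^sup>2 + 4 * e * (vs + vm)\<^sup>2)" and "Rb = sqrt (e2\<^sup>2 + 4 * e * (vs + vp)\<^sup>2)"
  have vs: "vs > vm" "vs > vp" using state unfolding two_shock_state_def by auto
  have D: "um - up = (vs - vm) / (vs + vm) * (Ra - e2) + (vs - vp) / (vs + vp) * (Rb + e2)"
    using two_shock_state_identities(2)[OF state vm vp] unfolding Ra_def Rb_def .
  have "e2 \<le> Ra" "0 \<le> Rb" unfolding Ra_def Rb_def
    using real_sqrt_le_mono[of "e2\<^sup>2" "e2\<^sup>2 + 4 * e * (vs + vm)\<^sup>2"] e e2 by auto
  moreover have "(vs - vm) / (vs + vm) < 1" "(vs - vp) / (vs + vp) < 1"
    "(vs - vm) / (vs + vm) > 0" "(vs - vp) / (vs + vp) > 0" using vs vm vp by simp_all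
  ultimately have "(vs - vm) / (vs + vm) * (Ra - e2) \<le> Ra - e2"
    "(vs - vp) / (vs + vp) * (Rb + e2) < Rb + e2"
    using mult_right_mono[of "(vs - vm) / (vs + vm)" 1 "Ra - e2"]
      mult_strict_right_mono[of "(vs - vp) / (vs + vp)" 1 "Rb + e2"] e2
    by auto
  then have "um - up < (Ra - e2) + (Rb + e2)" unfolding D by linarith
  moreover have "Ra \<le> e2 + 2 * sqrt e * (vs + vm)" "Rb \<le> e2 + 2 * sqrt e * (vs + vp)"
    unfolding Ra_def Rb_def four_mult_square_eq[OF less_imp_le[OF e]]
    using sqrt_sum_squares_le_sum_abs[of e2 "2 * sqrt e * (vs + vm)"]
      sqrt_sum_squares_le_sum_abs[of e2 "2 * sqrt e * (vs + vp)"] vs vm vp e2 e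
    by simp_all
  ultimately have "um - up < (e2 + 2 * sqrt e * (vs + vm)) + (e2 + 2 * sqrt e * (vs + vp))"
    by linarith
  then have "um - up - 2 * e2 < 4 * sqrt e * (vs + (vm + vp) / 2)" by (simp add: field_simps)
  then have "(um - up - 2 * e2) / (4 * sqrt e) < vs + (vm + vp) / 2"
    using e by (simp add: pos_divide_less_eq mult.commute)
  then show ?thesis by simp
qed

lemma tendsto_ratio_at_top:
  fixes s :: "'a \<Rightarrow> real"
  shows "filterlim s at_top F \<Longrightarrow> ((\<lambda>e. (s e + a) / (s e + b)) \<longlongrightarrow> 1) F"
proof -
  have "((\<lambda>S::real. (S + a) / (S + b)) \<longlongrightarrow> 1) at_top" by real_asymp
  then show "filterlim s at_top F \<Longrightarrow> ?thesis" by (rule filterlim_compose)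
qed

lemma filterlim_two_shock_state_at_top:
  fixes e2 um vm up vp :: real and vs :: "real \<Rightarrow> real"
  assumes e2: "e2 > 0" and vm: "vm > 0" and vp: "vp > 0" and gap: "up < um - 2 * e2"
    and state: "\<forall>\<^sub>F e in at_right 0. two_shock_state e e2 um vm up vp (vs e)"
  shows "filterlim vs at_top (at_right 0)"
proof (rule filterlim_at_top_mono)
  show "filterlim (\<lambda>e. (um - up - 2 * e2) / (4 * sqrt e) - (vm + vp) / 2) at_top (at_right 0)"
    using gap by real_asymp
  show "\<forall>\<^sub>F e in at_right 0. (um - up - 2 * e2) / (4 * sqrt e) - (vm + vp) / 2 \<le> vs e"
    using state eventually_at_right_less[of 0]
    by eventually_elim (use two_shock_state_lower_bound[OF _ vm vp _ e2] in force)
qed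

lemma tendsto_sqrt_gap:
  fixes s :: "real \<Rightarrow> real"
  shows "((\<lambda>e. sqrt (a\<^sup>2 + 4 * e * (s e + x)\<^sup>2) - sqrt (a\<^sup>2 + 4 * e * (s e + y)\<^sup>2)) \<longlongrightarrow> 0) (at_right 0)"
proof (rule Lim_null_comparison)
  show "\<forall>\<^sub>F e in at_right 0.
      norm (sqrt (a\<^sup>2 + 4 * e * (s e + x)\<^sup>2) - sqrt (a\<^sup>2 + 4 * e * (s e + y)\<^sup>2)) \<le> 2 * sqrt e * \<bar>x - y\<bar>"
    using eventually_at_right_less[of 0]
  proof eventually_elim
    case (elim e)
    then show ?case
      using sqrt_four_mult_lipschitz[where e=e and a=a and x="s e + x" and y="s e + y"] by simp
  qed
  show "((\<lambda>e. 2 * sqrt e * \<bar>x - y\<bar>) \<longlongrightarrow> 0) (at_right 0)" by real_asymp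
qed

lemma tendsto_two_shock_square_roots:
  fixes e2 um vm up vp :: real and vs :: "real \<Rightarrow> real"
  assumes e2: "e2 > 0" and vm: "vm > 0" and vp: "vp > 0" and gap: "up < um - 2 * e2"
    and state: "\<forall>\<^sub>F e in at_right 0. two_shock_state e e2 um vm up vp (vs e)"
  defines "X \<equiv> \<lambda>e. sqrt (e2\<^sup>2 + 4 * e * (vs e + vm)\<^sup>2) - e2"
    and "Y \<equiv> \<lambda>e. sqrt (e2\<^sup>2 + 4 * e * (vs e + vp)\<^sup>2) + e2"
  shows "(X \<longlongrightarrow> (um - up - 2 * e2) / 2) (at_right 0)"
    and "(Y \<longlongrightarrow> (um - up + 2 * e2) / 2) (at_right 0)"
proof -
  define p where "p e = (vs e - vm) / (vs e + vm)" for e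
  define r where "r e = (vs e - vp) / (vs e + vp)" for e
  define \<epsilon> where "\<epsilon> e = Y e - X e - 2 * e2" for e
  have ev: "\<forall>\<^sub>F e in at_right 0. um - up = p e * X e + r e * Y e \<and> p e + r e > 0"
    using state
  proof eventually_elim
    case (elim e)
    then have "vs e > vm" "vs e > vp" unfolding two_shock_state_def by auto
    then have "p e + r e > 0" using vm vp unfolding p_def r_def by (simp add: add_pos_pos)
    then show ?case
      using two_shock_state_identities(2)[OF elim vm vp] unfolding X_def Y_def p_def r_def by simp
  qed
  from filterlim_two_shock_state_at_top[OF e2 vm vp gap state]
  have p: "(p \<longlongrightarrow> 1) (at_right 0)" and r: "(r \<longlongrightarrow> 1) (at_right 0)"
    unfolding p_def r_def using tendsto_ratio_at_top[of vs _ "- vm"] tendsto_ratio_at_top[of vs _ "- vp"]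
    by simp_all
  have \<epsilon>: "(\<epsilon> \<longlongrightarrow> 0) (at_right 0)"
    using tendsto_sqrt_gap[of e2 vs vp vm] unfolding \<epsilon>_def X_def Y_def by simp
  have "((\<lambda>e. (um - up - r e * (2 * e2 + \<epsilon> e)) / (p e + r e)) \<longlongrightarrow> (um - up - 2 * e2) / 2) (at_right 0)"
    using p r \<epsilon> by (auto intro!: tendsto_eq_intros)
  moreover have "\<forall>\<^sub>F e in at_right 0. (um - up - r e * (2 * e2 + \<epsilon> e)) / (p e + r e) = X e"
    using ev by eventually_elim (auto simp: \<epsilon>_def field_simps)
  ultimately show X: "(X \<longlongrightarrow> (um - up - 2 * e2) / 2) (at_right 0)"
    by (rule Lim_transform_eventually)
  show "(Y \<longlongrightarrow> (um - up + 2 * e2) / 2) (at_right 0)"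
    using tendsto_add[OF X tendsto_add[OF tendsto_const[of "2 * e2"] \<epsilon>]]
    unfolding \<epsilon>_def by (simp add: field_simps)
qed

lemma two_shock_state_limits:
  fixes e2 um vm up vp :: real and vs :: "real \<Rightarrow> real"
  assumes e2: "e2 > 0" and vm: "vm > 0" and vp: "vp > 0" and gap: "up < um - 2 * e2"
    and state: "\<forall>\<^sub>F e in at_right 0. two_shock_state e e2 um vm up vp (vs e)"
  shows "((\<lambda>e. ustar e e2 um vm (vs e)) \<longlongrightarrow> (um + up) / 2 + e2) (at_right 0)"
    and "((\<lambda>e. sigma1 e e2 um vm (vs e)) \<longlongrightarrow> (um + up) / 2) (at_right 0)"
    and "((\<lambda>e. sigma2 e e2 um vm up vp (vs e)) \<longlongrightarrow> (um + up) / 2) (at_right 0)"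
    and "((\<lambda>e. vs e * (sigma2 e e2 um vm up vp (vs e) - sigma1 e e2 um vm (vs e)))
           \<longlongrightarrow> (vp * (um - up + 2 * e2) - vm * (up - um + 2 * e2)) / 2) (at_right 0)"
proof -
  define X where "X e = sqrt (e2\<^sup>2 + 4 * e * (vs e + vm)\<^sup>2) - e2" for e
  define Y where "Y e = sqrt (e2\<^sup>2 + 4 * e * (vs e + vp)\<^sup>2) + e2" for e
  define p where "p e = (vs e - vm) / (vs e + vm)" for e
  define qm where "qm e = vs e / (vs e + vm)" for e
  define qp where "qp e = vs e / (vs e + vp)" for e
  have X: "(X \<longlongrightarrow> (um - up - 2 * e2) / 2) (at_right 0)"
    and Y: "(Y \<longlongrightarrow> (um - up + 2 * e2) / 2) (at_right 0)"
    using tendsto_two_shock_square_roots[OF e2 vm vp gap state] unfolding X_def Y_def by simp_all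
  from filterlim_two_shock_state_at_top[OF e2 vm vp gap state]
  have p: "(p \<longlongrightarrow> 1) (at_right 0)" and qm: "(qm \<longlongrightarrow> 1) (at_right 0)" and qp: "(qp \<longlongrightarrow> 1) (at_right 0)"
    unfolding p_def qm_def qp_def using tendsto_ratio_at_top[of vs _ "- vm"] tendsto_ratio_at_top[of vs _ 0]
    by simp_all
  have ev: "\<forall>\<^sub>F e in at_right 0.
      ustar e e2 um vm (vs e) = um - p e * X e
    \<and> sigma1 e e2 um vm (vs e) = um - qm e * X e - e2
    \<and> sigma2 e e2 um vm up vp (vs e) = up + qp e * Y e - e2
    \<and> vs e * (sigma2 e e2 um vm up vp (vs e) - sigma1 e e2 um vm (vs e)) = vp * (qp e * Y e) + vm * (qm e * X e)"
    using state
    by eventually_elim (use two_shock_state_identities[OF _ vm vp] in \<open>simp add: X_def Y_def p_def qm_def qp_def\<close>)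
  have "((\<lambda>e. um - p e * X e) \<longlongrightarrow> (um + up) / 2 + e2) (at_right 0)"
    using p X by (auto intro!: tendsto_eq_intros simp: field_simps)
  then show "((\<lambda>e. ustar e e2 um vm (vs e)) \<longlongrightarrow> (um + up) / 2 + e2) (at_right 0)"
    by (rule Lim_transform_eventually) (rule eventually_mono[OF ev], linarith)
  have "((\<lambda>e. um - qm e * X e - e2) \<longlongrightarrow> (um + up) / 2) (at_right 0)"
    using qm X by (auto intro!: tendsto_eq_intros simp: field_simps)
  then show "((\<lambda>e. sigma1 e e2 um vm (vs e)) \<longlongrightarrow> (um + up) / 2) (at_right 0)"
    by (rule Lim_transform_eventually) (rule eventually_mono[OF ev], linarith)
  have "((\<lambda>e. up + qp e * Y e - e2) \<longlongrightarrow> (um + up) / 2) (at_right 0)"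
    using qp Y by (auto intro!: tendsto_eq_intros simp: field_simps)
  then show "((\<lambda>e. sigma2 e e2 um vm up vp (vs e)) \<longlongrightarrow> (um + up) / 2) (at_right 0)"
    by (rule Lim_transform_eventually) (rule eventually_mono[OF ev], linarith)
  have "((\<lambda>e. vp * (qp e * Y e) + vm * (qm e * X e))
      \<longlongrightarrow> (vp * (um - up + 2 * e2) - vm * (up - um + 2 * e2)) / 2) (at_right 0)"
    using qm qp X Y by (auto intro!: tendsto_eq_intros simp: field_simps)
  then show "((\<lambda>e. vs e * (sigma2 e e2 um vm up vp (vs e) - sigma1 e e2 um vm (vs e)))
           \<longlongrightarrow> (vp * (um - up + 2 * e2) - vm * (up - um + 2 * e2)) / 2) (at_right 0)"
    by (rule Lim_transform_eventually) (rule eventually_mono[OF ev], linarith)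
qed

theorem theorem6p1:
  fixes e2 um vm up vp :: real and vstar :: "real \<Rightarrow> real"
  assumes e2: "e2 > 0" and vm: "vm > 0" and vp: "vp > 0"
    and ult: "up < um - 2 * e2"
    and vstar: "\<forall>\<^sub>F e1 in at_right 0. two_shock_state e1 e2 um vm up vp (vstar e1)"
  defines "\<sigma> \<equiv> (um + up) / 2"
    and "w \<equiv> (\<lambda>t. (vp * (um - up + 2 * e2) - vm * (up - um + 2 * e2)) / 2 * t)"
    and "u_lim \<equiv> (\<lambda>z. um + (up - um) * H (snd z - (um + up) / 2 * fst z))"
    and "v_lim \<equiv> (\<lambda>z. vm + (vp - vm) * H (snd z - (um + up) / 2 * fst z))"
  shows "(\<forall>\<^sub>F e1 in at_right 0. \<exists>vs. two_shock_state e1 e2 um vm up vp vs)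
     \<and> (\<forall>\<phi>. test_fun \<phi> \<longrightarrow>
        ((\<lambda>e1. pair_fn (two_shock_u e1 e2 um vm up vp (vstar e1)) \<phi>)
          \<longlongrightarrow> pair_fn u_lim \<phi>) (at_right 0))
     \<and> (\<forall>\<phi>. test_fun \<phi> \<longrightarrow>
        ((\<lambda>e1. pair_fn (two_shock_v e1 e2 um vm up vp (vstar e1)) \<phi>)
          \<longlongrightarrow> pair_fn v_lim \<phi> + pair_delta w \<sigma> \<phi>) (at_right 0))
     \<and> ((\<lambda>e1. ustar e1 e2 um vm (vstar e1)) \<longlongrightarrow> \<sigma> + e2) (at_right 0)
     \<and> (\<forall>\<phi>. test_fun \<phi> \<longrightarrow>
        pair_fn u_lim (d_t \<phi>) + pair_fn (\<lambda>z. (u_lim z)^2 / 2) (d_x \<phi>) = 0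
      \<and> pair_fn v_lim (d_t \<phi>) + pair_fn (\<lambda>z. u_lim z * v_lim z - e2 * v_lim z) (d_x \<phi>)
        + pair_delta w \<sigma> (\<lambda>z. d_t \<phi> z + ((\<sigma> + e2) - e2) * d_x \<phi> z) = 0)"
proof -
  note limits = two_shock_state_limits[OF e2 vm vp ult vstar, folded \<sigma>_def]
  define k where "k = (vp * (um - up + 2 * e2) - vm * (up - um + 2 * e2)) / 2"
  have w: "w = (\<lambda>t. k * t)" unfolding w_def k_def ..
  have u_lim: "u_lim = jump \<sigma> um up" and v_lim: "v_lim = jump \<sigma> vm vp"
    unfolding u_lim_def v_lim_def \<sigma>_def by (simp_all add: fun_eq_iff jump_eq_Heaviside)
  have "((\<lambda>e1. pair_fn (two_shock_u e1 e2 um vm up vp (vstar e1)) \<phi>) \<longlongrightarrow> pair_fn u_lim \<phi>) (at_right 0)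
     \<and> ((\<lambda>e1. pair_fn (two_shock_v e1 e2 um vm up vp (vstar e1)) \<phi>)
          \<longlongrightarrow> pair_fn v_lim \<phi> + pair_delta w \<sigma> \<phi>) (at_right 0)
     \<and> pair_fn u_lim (d_t \<phi>) + pair_fn (\<lambda>z. (u_lim z)^2 / 2) (d_x \<phi>) = 0
     \<and> pair_fn v_lim (d_t \<phi>) + pair_fn (\<lambda>z. u_lim z * v_lim z - e2 * v_lim z) (d_x \<phi>)
        + pair_delta w \<sigma> (\<lambda>z. d_t \<phi> z + ((\<sigma> + e2) - e2) * d_x \<phi> z) = 0"
    if test: "test_fun \<phi>" for \<phi>
  proof -
    obtain B where "test_function \<phi> B" using test_fun_imp_test_function[OF test] by blast
    then interpret test_function \<phi> B .
    have "\<sigma> * (um - up) = um\<^sup>2 / 2 - up\<^sup>2 / 2" "k = (um * vm - e2 * vm) - (up * vp - e2 * vp) - \<sigma> * (vm - vp)"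
      unfolding \<sigma>_def k_def by (simp_all add: field_simps power2_eq_square)
    from jump_weak_solution[OF this(1)] jump_delta_weak_solution[OF this(2)]
    show ?thesis
      unfolding u_lim v_lim w jump_comp[of "\<lambda>u. u\<^sup>2 / 2"] jump_comp2[of "\<lambda>u v. u * v - e2 * v"]
      using tendsto_pair_fn_two_shock[OF vstar limits(2,3,1,4)[folded k_def]] by simp
  qed
  moreover have "\<forall>\<^sub>F e1 in at_right 0. \<exists>vs. two_shock_state e1 e2 um vm up vp vs"
    using vstar by (rule eventually_mono) blast
  ultimately show ?thesis using limits(1) by blast
qed

end
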